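(* Let $k\geq 3$ be an odd integer and let $n,s$ be integers with $2\leq s\leq n-2$. Then $mp^{k}(A_{n,s})=s(n-s)$.
   Context: The arrangement graph $A_{n,s}$ ($n\geq 2$, $1\leq s\leq n-1$) has as vertices all sequences $[a_1,\dots,a_s]$ of $s$ distinct elements of $\{1,\dots,n\}$, two vertices being adjacent iff they differ in exactly one position; it is $s(n-s)$-regular with $n!/(n-s)!$ vertices. An integer $k$-matching of $G$ is a function $h:E(G)\to\{0,1,\dots,k\}$ with $\sum_{e\in\Gamma(v)}h(e)\leq k$ for all $v$ ($\Gamma(v)$ the edges incident with $v$); it is perfect if every vertex has sum $k$, and almost perfect if exactly one vertex has sum $k-1$ and all others have sum $k$. $mp^{k}(G)$ is the minimum size of $F\subseteq E(G)$ such that $G-F$ has neither a perfect nor an almost perfect integer $k$-matching. *)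

theory Defs
  imports Main
begin

text \<open>A simple graph is given by a vertex set V and an edge set E of 2-element subsets of V.\<close>

definition incident_edges :: "'a set set \<Rightarrow> 'a \<Rightarrow> 'a set set" where
  "incident_edges E v = {e \<in> E. v \<in> e}"

definition is_int_matching :: "nat \<Rightarrow> 'a set \<Rightarrow> 'a set set \<Rightarrow> ('a set \<Rightarrow> nat) \<Rightarrow> bool" where
  "is_int_matching k V E h \<longleftrightarrow>
     (\<forall>e\<in>E. h e \<le> k) \<and> (\<forall>v\<in>V. (\<Sum>e\<in>incident_edges E v. h e) \<le> k)"

definition has_perfect_int_matching :: "nat \<Rightarrow> 'a set \<Rightarrow> 'a set set \<Rightarrow> bool" where
  "has_perfect_int_matching k V E \<longleftrightarrow>
     (\<exists>h. is_int_matching k V E h \<and> (\<forall>v\<in>V. (\<Sum>e\<in>incident_edges E v. h e) = k))"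

definition has_almost_perfect_int_matching :: "nat \<Rightarrow> 'a set \<Rightarrow> 'a set set \<Rightarrow> bool" where
  "has_almost_perfect_int_matching k V E \<longleftrightarrow>
     (\<exists>h. is_int_matching k V E h \<and>
        (\<exists>u\<in>V. (\<Sum>e\<in>incident_edges E u. h e) = k - 1 \<and>
                (\<forall>v\<in>V. v \<noteq> u \<longrightarrow> (\<Sum>e\<in>incident_edges E v. h e) = k)))"

definition mp_int :: "nat \<Rightarrow> 'a set \<Rightarrow> 'a set set \<Rightarrow> nat" where
  "mp_int k V E = (LEAST m. \<exists>F. F \<subseteq> E \<and> card F = m \<and>
        \<not> has_perfect_int_matching k V (E - F) \<and>
        \<not> has_almost_perfect_int_matching k V (E - F))"

definition arr_vertices :: "nat \<Rightarrow> nat \<Rightarrow> nat list set" where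
  "arr_vertices n s = {xs. length xs = s \<and> distinct xs \<and> set xs \<subseteq> {1..n}}"

definition arr_adj :: "nat \<Rightarrow> nat list \<Rightarrow> nat list \<Rightarrow> bool" where
  "arr_adj s xs ys \<longleftrightarrow> card {i. i < s \<and> xs ! i \<noteq> ys ! i} = 1"

definition arr_edges :: "nat \<Rightarrow> nat \<Rightarrow> nat list set set" where
  "arr_edges n s = {{xs, ys} | xs ys. xs \<in> arr_vertices n s \<and> ys \<in> arr_vertices n s \<and> arr_adj s xs ys}"

end

theory Submission
  imports Defs "HOL-Combinatorics.Permutations"
begin

text \<open>
  Every vertex of the arrangement graph has degree \<open>d = s(n-s)\<close>. Deleting the \<open>d\<close> edges at
  one vertex isolates it, which rules out perfect and almost perfect integer \<open>k\<close>-matchings for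
  \<open>k \<ge> 2\<close>. Conversely, if fewer than \<open>d\<close> edges \<open>F\<close> are deleted, some perfect matching of the
  graph avoids \<open>F\<close>, and weight \<open>k\<close> on its edges is a perfect integer \<open>k\<close>-matching.
  To find it, fix one perfect matching \<open>M\<close> and average over the automorphism group \<open>\<Gamma>\<close>,
  which acts transitively on the edges (permute values and positions): every edge lies in the
  same number \<open>c\<close> of images \<open>\<gamma>M\<close>, double counting gives \<open>d c = |\<Gamma>|\<close>, and so at most
  \<open>|F| c < |\<Gamma>|\<close> images meet \<open>F\<close>.
\<close>

lemma sum_card_filter_swap:
  assumes "finite A" "finite B"
  shows "(\<Sum>a\<in>A. card {b\<in>B. P a b}) = (\<Sum>b\<in>B. card {a\<in>A. P a b})"
proof -
  have "(\<Sum>a\<in>A. card {b\<in>B. P a b}) = (\<Sum>a\<in>A. \<Sum>b\<in>B. if P a b then 1 else 0)"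
    using assms by (simp add: sum.inter_filter[symmetric])
  also have "\<dots> = (\<Sum>b\<in>B. \<Sum>a\<in>A. if P a b then 1 else 0)"
    by (rule sum.swap)
  also have "\<dots> = (\<Sum>b\<in>B. card {a\<in>A. P a b})"
    using assms by (simp add: sum.inter_filter[symmetric])
  finally show ?thesis .
qed

lemma permutes_extend:
  assumes "finite S" "A \<subseteq> S" "inj_on f A" "f ` A \<subseteq> S"
  obtains \<sigma> where "\<sigma> permutes S" "\<forall>a\<in>A. \<sigma> a = f a"
proof -
  have "card (S - A) = card (S - f ` A)"
    using assms finite_subset[OF assms(2,1)] by (simp add: card_Diff_subset card_image)
  then obtain g where g: "bij_betw g (S - A) (S - f ` A)"
    using finite_same_card_bij assms(1) by blast
  define \<sigma> where "\<sigma> x = (if x \<in> A then f x else if x \<in> S then g x else x)" for x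
  have "bij_betw \<sigma> A (f ` A)"
    using assms(3) by (simp add: bij_betw_def inj_on_def \<sigma>_def image_def)
  moreover have "bij_betw \<sigma> (S - A) (S - f ` A)"
    using g by (rule bij_betw_cong[THEN iffD1, rotated]) (simp add: \<sigma>_def)
  ultimately have "bij_betw \<sigma> (A \<union> (S - A)) (f ` A \<union> (S - f ` A))"
    by (rule bij_betw_combine) auto
  moreover have "A \<union> (S - A) = S" "f ` A \<union> (S - f ` A) = S"
    using assms by auto
  ultimately have "\<sigma> permutes S"
    by (intro bij_imp_permutes) (auto simp: \<sigma>_def)
  then show ?thesis
    using that by (auto simp: \<sigma>_def)
qed

lemma permutes_map_eq:
  assumes "finite S" "distinct xs" "distinct ys" "length xs = length ys"
    and "set xs \<subseteq> S" "set ys \<subseteq> S"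
  obtains \<sigma> where "\<sigma> permutes S" "map \<sigma> xs = ys"
proof -
  define f where "f a = the (map_of (zip xs ys) a)" for a
  have f_nth: "f (xs ! i) = ys ! i" if "i < length xs" for i
    using assms(2,4) that by (simp add: f_def map_of_zip_nth)
  have f_xs: "map f xs = ys"
    by (rule nth_equalityI) (simp_all add: assms(4) f_nth)
  then have "inj_on f (set xs)" "f ` set xs \<subseteq> S"
    using assms(3,6) by (auto simp: distinct_map)
  then obtain \<sigma> where "\<sigma> permutes S" "\<forall>a\<in>set xs. \<sigma> a = f a"
    using permutes_extend[OF assms(1,5)] by metis
  moreover from this(2) have "map \<sigma> xs = ys"
    using f_xs by (metis map_eq_conv)
  ultimately show ?thesis
    using that by blast
qed

lemma permute_list_transpose_involutory:
  assumes "i < length xs" "j < length xs"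
  shows "permute_list (transpose i j) (permute_list (transpose i j) xs) = xs"
proof -
  have "transpose i j permutes {..<length xs}"
    using assms by (intro permutes_swap_id) auto
  then show ?thesis
    by (simp flip: permute_list_compose)
qed

lemma permute_list_transpose_update:
  assumes "i < length xs" "j < length xs"
  shows "permute_list (transpose i j) (xs[i := b]) = (permute_list (transpose i j) xs)[j := b]"
proof -
  have \<tau>: "transpose i j permutes {..<length xs}"
    using assms by (intro permutes_swap_id) auto
  show ?thesis
  proof (rule nth_equalityI)
    fix k
    assume "k < length (permute_list (transpose i j) (xs[i := b]))"
    then have "k < length xs" "transpose i j k < length xs"
      using permutes_in_image[OF \<tau>] by auto
    moreover have "i = transpose i j k \<longleftrightarrow> j = k"
      by (auto simp: transpose_def)
    ultimately show "permute_list (transpose i j) (xs[i := b]) ! k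
        = (permute_list (transpose i j) xs)[j := b] ! k"
      using \<tau> assms by (simp add: permute_list_nth nth_list_update)
  qed simp
qed

definition index_in :: "'a set \<Rightarrow> 'a \<Rightarrow> nat" where
  "index_in W = (SOME h. bij_betw h W {..<card W})"

definition elem_at :: "'a set \<Rightarrow> nat \<Rightarrow> 'a" where
  "elem_at W = inv_into W (index_in W)"

lemma bij_index_in:
  assumes "finite W"
  shows "bij_betw (index_in W) W {..<card W}"
proof -
  obtain h where "bij_betw h W {0..<card W}"
    using ex_bij_betw_finite_nat[OF assms] ..
  then have "\<exists>h. bij_betw h W {..<card W}"
    by (auto simp: atLeast0LessThan)
  then show ?thesis
    unfolding index_in_def by (rule someI_ex)
qed

lemma index_in_less: "finite W \<Longrightarrow> a \<in> W \<Longrightarrow> index_in W a < card W"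
  using bij_betw_apply[OF bij_index_in] by simp

lemma elem_at_in: "finite W \<Longrightarrow> i < card W \<Longrightarrow> elem_at W i \<in> W"
  unfolding elem_at_def using bij_betw_apply[OF bij_betw_inv_into[OF bij_index_in]] by simp

lemma elem_at_index_in [simp]: "finite W \<Longrightarrow> a \<in> W \<Longrightarrow> elem_at W (index_in W a) = a"
  unfolding elem_at_def by (rule bij_betw_inv_into_left[OF bij_index_in])

lemma index_in_elem_at [simp]: "finite W \<Longrightarrow> i < card W \<Longrightarrow> index_in W (elem_at W i) = i"
  unfolding elem_at_def by (rule bij_betw_inv_into_right[OF bij_index_in]) simp_all

section \<open>Perfect matchings and integer matchings\<close>

definition perfect_matching :: "'a set \<Rightarrow> 'a set set \<Rightarrow> 'a set set \<Rightarrow> bool" where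
  "perfect_matching V E M \<longleftrightarrow> M \<subseteq> E \<and> (\<forall>v\<in>V. card {e\<in>M. v \<in> e} = 1)"

lemma perfect_matching_of_involution:
  assumes "\<And>x. x \<in> V \<Longrightarrow> f x \<in> V \<and> f (f x) = x \<and> {x, f x} \<in> E"
  shows "perfect_matching V E ((\<lambda>x. {x, f x}) ` V)"
proof -
  have "{e \<in> (\<lambda>x. {x, f x}) ` V. v \<in> e} = {{v, f v}}" if "v \<in> V" for v
  proof (intro set_eqI iffI)
    fix e
    assume "e \<in> {e \<in> (\<lambda>x. {x, f x}) ` V. v \<in> e}"
    then obtain x where "x \<in> V" "e = {x, f x}" "v = x \<or> v = f x"
      by blast
    then show "e \<in> {{v, f v}}"
      using assms by (auto simp: insert_commute)
  qed (use that in auto)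
  then show ?thesis
    using assms by (auto simp: perfect_matching_def)
qed

lemma has_perfect_int_matchingI:
  assumes "finite E" "perfect_matching V E M"
  shows "has_perfect_int_matching k V E"
proof -
  define h where "h e = (if e \<in> M then k else 0)" for e
  have "(\<Sum>e\<in>incident_edges E v. h e) = k" if "v \<in> V" for v
  proof -
    have "{e \<in> incident_edges E v. e \<in> M} = {e\<in>M. v \<in> e}"
      using assms(2) by (auto simp: perfect_matching_def incident_edges_def)
    then have "(\<Sum>e\<in>incident_edges E v. h e) = (\<Sum>e\<in>{e\<in>M. v \<in> e}. k)"
      using assms(1) by (simp add: h_def sum.inter_filter[symmetric] incident_edges_def)
    then show ?thesis
      using assms(2) that by (simp add: perfect_matching_def)
  qed
  then show ?thesis
    unfolding has_perfect_int_matching_def is_int_matching_def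
    by (intro exI[of _ h]) (auto simp: h_def)
qed

lemma no_int_matching_if_isolated:
  assumes "u \<in> V" "incident_edges E u = {}" "2 \<le> k"
  shows "\<not> has_perfect_int_matching k V E \<and> \<not> has_almost_perfect_int_matching k V E"
proof -
  have at_u: "(\<Sum>e\<in>incident_edges E u. h e) = 0" for h :: "'a set \<Rightarrow> nat"
    using assms(2) by simp
  have "(\<Sum>e\<in>incident_edges E u. h e) \<noteq> k" for h :: "'a set \<Rightarrow> nat"
    using at_u assms(3) by simp
  moreover have "(\<Sum>e\<in>incident_edges E u. h e) \<noteq> k - 1" for h :: "'a set \<Rightarrow> nat"
    using at_u assms(3) by simp
  ultimately show ?thesis
    using assms(1) unfolding has_perfect_int_matching_def has_almost_perfect_int_matching_def
    by metis
qed

lemma mp_int_eqI: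
  assumes "u \<in> V" "2 \<le> k" and degree: "card (incident_edges E u) = d"
    and survives: "\<And>F. F \<subseteq> E \<Longrightarrow> card F < d \<Longrightarrow> has_perfect_int_matching k V (E - F)"
  shows "mp_int k V E = d"
  unfolding mp_int_def
proof (rule Least_equality)
  have "incident_edges (E - incident_edges E u) u = {}"
    by (auto simp: incident_edges_def)
  then show "\<exists>F. F \<subseteq> E \<and> card F = d \<and> \<not> has_perfect_int_matching k V (E - F)
      \<and> \<not> has_almost_perfect_int_matching k V (E - F)"
    using no_int_matching_if_isolated[OF assms(1) _ assms(2)] degree
    by (intro exI[of _ "incident_edges E u"]) (auto simp: incident_edges_def)
qed (use survives not_less in blast)

section \<open>Edge-transitive regular graphs\<close>

definition graph_aut :: "'a set \<Rightarrow> 'a set set \<Rightarrow> ('a \<Rightarrow> 'a) set" where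
  "graph_aut V E = {\<pi>. \<pi> permutes V \<and> (\<forall>e\<in>E. \<pi> ` e \<in> E)}"

locale regular_graph =
  fixes V :: "'a set" and E :: "'a set set" and d :: nat
  assumes finite_vertices: "finite V"
    and edge_doubleton: "e \<in> E \<Longrightarrow> e \<subseteq> V \<and> card e = 2"
    and degree: "v \<in> V \<Longrightarrow> card (incident_edges E v) = d"
begin

lemma finite_edges: "finite E"
  using edge_doubleton finite_vertices by (meson PowI finite_Pow_iff finite_subset subsetI)

lemma sum_degrees:
  assumes "X \<subseteq> E"
  shows "(\<Sum>v\<in>V. card {e\<in>X. v \<in> e}) = 2 * card X"
proof -
  have "finite X"
    using assms finite_edges finite_subset by blast
  then have "(\<Sum>v\<in>V. card {e\<in>X. v \<in> e}) = (\<Sum>e\<in>X. card {v\<in>V. v \<in> e})"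
    by (rule sum_card_filter_swap[OF finite_vertices])
  also have "\<dots> = (\<Sum>e\<in>X. 2)"
  proof (rule sum.cong)
    fix e
    assume "e \<in> X"
    then have "{v\<in>V. v \<in> e} = e" and "card e = 2"
      using assms edge_doubleton by auto
    then show "card {v\<in>V. v \<in> e} = 2"
      by simp
  qed simp
  finally show ?thesis
    by simp
qed

lemma card_edges: "2 * card E = d * card V"
  using sum_degrees[of E] degree by (simp add: incident_edges_def mult.commute)

lemma card_perfect_matching:
  assumes "perfect_matching V E M"
  shows "2 * card M = card V"
  using sum_degrees[of M] assms by (simp add: perfect_matching_def)

lemma finite_graph_aut: "finite (graph_aut V E)"
  using finite_permutations[OF finite_vertices]
  by (rule finite_subset[rotated]) (auto simp: graph_aut_def)

lemma id_in_graph_aut: "id \<in> graph_aut V E"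
  by (simp add: graph_aut_def)

lemma comp_in_graph_aut: "\<pi> \<in> graph_aut V E \<Longrightarrow> \<rho> \<in> graph_aut V E \<Longrightarrow> \<pi> \<circ> \<rho> \<in> graph_aut V E"
  by (auto simp: graph_aut_def permutes_compose) (metis image_image)

lemma inj_graph_aut: "\<pi> \<in> graph_aut V E \<Longrightarrow> inj \<pi>"
  by (simp add: graph_aut_def) (meson permutes_inj)

lemma comp_graph_aut_surj:
  assumes "\<pi> \<in> graph_aut V E"
  shows "(\<circ>) \<pi> ` graph_aut V E = graph_aut V E"
proof (rule endo_inj_surj[OF finite_graph_aut])
  have "inj \<pi>"
    using assms by (rule inj_graph_aut)
  then show "inj_on ((\<circ>) \<pi>) (graph_aut V E)"
    by (auto intro!: inj_onI simp: fun_eq_iff inj_eq)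
qed (use assms comp_in_graph_aut in blast)

lemma card_image_graph_aut:
  assumes "\<pi> \<in> graph_aut V E"
  shows "card ((`) \<pi> ` X) = card X"
proof -
  have "inj_on ((`) \<pi>) X"
    using inj_graph_aut[OF assms] by (simp add: inj_on_def inj_image_eq_iff)
  then show ?thesis
    by (rule card_image)
qed

lemma perfect_matching_image:
  assumes "\<pi> \<in> graph_aut V E" "perfect_matching V E M"
  shows "perfect_matching V E ((`) \<pi> ` M)"
proof -
  have inj: "inj \<pi>"
    using assms(1) by (rule inj_graph_aut)
  have "card {e'\<in>(`) \<pi> ` M. v \<in> e'} = 1" if "v \<in> V" for v
  proof -
    have "\<pi> ` V = V"
      using assms(1) by (simp add: graph_aut_def permutes_image)
    then have "v \<in> \<pi> ` V"
      using that by simp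
    then obtain w where w: "v = \<pi> w" "w \<in> V"
      by (rule imageE)
    have "v \<in> \<pi> ` e \<longleftrightarrow> w \<in> e" for e
      using inj w by (simp add: inj_image_mem_iff)
    then have "{e'\<in>(`) \<pi> ` M. v \<in> e'} = (`) \<pi> ` {e\<in>M. w \<in> e}"
      by blast
    then have "card {e'\<in>(`) \<pi> ` M. v \<in> e'} = card {e\<in>M. w \<in> e}"
      using card_image_graph_aut[OF assms(1)] by simp
    then show ?thesis
      using assms(2) w by (simp add: perfect_matching_def)
  qed
  moreover have "(`) \<pi> ` M \<subseteq> E"
    using assms by (auto simp: perfect_matching_def graph_aut_def)
  ultimately show ?thesis
    by (simp add: perfect_matching_def)
qed

definition covering_auts :: "'a set set \<Rightarrow> 'a set \<Rightarrow> ('a \<Rightarrow> 'a) set" where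
  "covering_auts M f = {\<pi> \<in> graph_aut V E. f \<in> (`) \<pi> ` M}"

lemma covering_auts_image:
  assumes h: "h \<in> graph_aut V E"
  shows "covering_auts M (h ` e) = (\<circ>) h ` covering_auts M e"
proof (intro set_eqI iffI)
  fix \<pi>
  assume "\<pi> \<in> covering_auts M (h ` e)"
  then have \<pi>: "\<pi> \<in> graph_aut V E" "h ` e \<in> (`) \<pi> ` M"
    by (simp_all add: covering_auts_def)
  from \<pi>(2) obtain e' where e': "h ` e = \<pi> ` e'" "e' \<in> M"
    by (rule imageE)
  have "\<pi> \<in> (\<circ>) h ` graph_aut V E"
    using \<pi>(1) comp_graph_aut_surj[OF h] by simp
  then obtain \<rho> where \<rho>: "\<pi> = h \<circ> \<rho>" "\<rho> \<in> graph_aut V E"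
    by (rule imageE)
  have "h ` e = h ` (\<rho> ` e')"
    using e' \<rho> by (simp add: image_comp)
  then have "e = \<rho> ` e'"
    using inj_graph_aut[OF h] by (simp add: inj_image_eq_iff)
  then have "\<rho> \<in> covering_auts M e"
    using \<rho>(2) e'(2) by (simp add: covering_auts_def)
  with \<rho>(1) show "\<pi> \<in> (\<circ>) h ` covering_auts M e"
    by (rule image_eqI)
next
  fix \<pi>
  assume "\<pi> \<in> (\<circ>) h ` covering_auts M e"
  then obtain \<rho> where \<rho>: "\<pi> = h \<circ> \<rho>" "\<rho> \<in> covering_auts M e"
    by (rule imageE)
  then obtain e' where e': "e' \<in> M" "e = \<rho> ` e'"
    by (auto simp: covering_auts_def)
  have "h ` e = \<pi> ` e'"
    using \<rho>(1) e'(2) by (simp add: image_comp)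
  moreover have "\<pi> \<in> graph_aut V E"
    using h \<rho> comp_in_graph_aut by (simp add: covering_auts_def)
  ultimately show "\<pi> \<in> covering_auts M (h ` e)"
    using e'(1) by (simp add: covering_auts_def)
qed

end

locale edge_transitive_graph = regular_graph +
  fixes e0 :: "'a set"
  assumes base_edge: "e0 \<in> E"
    and edge_transitive: "f \<in> E \<Longrightarrow> \<exists>\<pi>\<in>graph_aut V E. \<pi> ` e0 = f"
begin

lemma card_covering_auts_eq:
  assumes "f \<in> E"
  shows "card (covering_auts M f) = card (covering_auts M e0)"
proof -
  obtain h where h: "h \<in> graph_aut V E" "h ` e0 = f"
    using edge_transitive[OF assms] by (elim bexE)
  have "covering_auts M f = (\<circ>) h ` covering_auts M e0"
    using covering_auts_image[OF h(1), of M e0] h(2) by simp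
  moreover have "inj_on ((\<circ>) h) (covering_auts M e0)"
    using inj_graph_aut[OF h(1)] by (auto intro!: inj_onI simp: fun_eq_iff inj_eq)
  ultimately show ?thesis
    by (simp add: card_image)
qed

lemma degree_mult_card_covering_auts:
  assumes "perfect_matching V E M"
  shows "d * card (covering_auts M e0) = card (graph_aut V E)"
proof -
  have "card E * card (covering_auts M e0) = (\<Sum>f\<in>E. card (covering_auts M f))"
    using card_covering_auts_eq by simp
  also have "\<dots> = (\<Sum>\<pi>\<in>graph_aut V E. card {f\<in>E. f \<in> (`) \<pi> ` M})"
    unfolding covering_auts_def by (rule sum_card_filter_swap[OF finite_edges finite_graph_aut])
  also have "\<dots> = (\<Sum>\<pi>\<in>graph_aut V E. card M)"
  proof (rule sum.cong)
    fix \<pi>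
    assume \<pi>: "\<pi> \<in> graph_aut V E"
    have "(`) \<pi> ` M \<subseteq> E"
      using perfect_matching_image[OF \<pi> assms] by (simp add: perfect_matching_def)
    then have "{f\<in>E. f \<in> (`) \<pi> ` M} = (`) \<pi> ` M"
      by (simp add: Collect_conj_eq Int_absorb1)
    then show "card {f\<in>E. f \<in> (`) \<pi> ` M} = card M"
      using card_image_graph_aut[OF \<pi>] by simp
  qed simp
  finally have "2 * card E * card (covering_auts M e0) = card (graph_aut V E) * (2 * card M)"
    by simp
  then have "card V * (d * card (covering_auts M e0)) = card V * card (graph_aut V E)"
    unfolding card_edges card_perfect_matching[OF assms] by (simp add: ac_simps)
  moreover have "2 \<le> card V"
    using card_mono[OF finite_vertices] edge_doubleton[OF base_edge] by metis
  ultimately show ?thesis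
    by simp
qed

lemma perfect_matching_image_avoiding:
  assumes "perfect_matching V E M" "F \<subseteq> E" "card F < d"
  shows "\<exists>\<pi>\<in>graph_aut V E. (`) \<pi> ` M \<inter> F = {}"
proof (rule ccontr)
  assume "\<not> ?thesis"
  then have meets: "{f\<in>F. f \<in> (`) \<pi> ` M} \<noteq> {}" if "\<pi> \<in> graph_aut V E" for \<pi>
    using that by (simp add: Int_def) (metis imageI)
  have "finite F"
    using assms(2) finite_edges finite_subset by blast
  let ?c = "card (covering_auts M e0)"
  have "card (graph_aut V E) = (\<Sum>\<pi>\<in>graph_aut V E. 1)"
    by simp
  also have "\<dots> \<le> (\<Sum>\<pi>\<in>graph_aut V E. card {f\<in>F. f \<in> (`) \<pi> ` M})"
    using meets \<open>finite F\<close> by (intro sum_mono) (simp add: Suc_le_eq card_gt_0_iff)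
  also have "\<dots> = (\<Sum>f\<in>F. card (covering_auts M f))"
    unfolding covering_auts_def by (rule sum_card_filter_swap[OF finite_graph_aut \<open>finite F\<close>])
  also have "\<dots> = card F * ?c"
    using card_covering_auts_eq assms(2) by (simp add: subset_iff)
  also have "\<dots> < d * ?c"
  proof -
    have "0 < card (graph_aut V E)"
      using id_in_graph_aut finite_graph_aut card_gt_0_iff by blast
    then have "0 < ?c"
      using degree_mult_card_covering_auts[OF assms(1)] by (metis gr0I mult_0_right)
    then show ?thesis
      using assms(3) by simp
  qed
  also have "\<dots> = card (graph_aut V E)"
    by (rule degree_mult_card_covering_auts[OF assms(1)])
  finally show False
    by simp
qed

theorem mp_int_eq_degree:
  assumes "perfect_matching V E M" "2 \<le> k"
  shows "mp_int k V E = d"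
proof -
  have "V \<noteq> {}"
    using base_edge edge_doubleton by fastforce
  then obtain u where u: "u \<in> V"
    by blast
  show ?thesis
  proof (rule mp_int_eqI[OF u assms(2) degree[OF u]])
    fix F
    assume "F \<subseteq> E" "card F < d"
    then obtain \<pi> where \<pi>: "\<pi> \<in> graph_aut V E" "(`) \<pi> ` M \<inter> F = {}"
      using perfect_matching_image_avoiding[OF assms(1)] by blast
    then have "perfect_matching V (E - F) ((`) \<pi> ` M)"
      using perfect_matching_image[OF \<pi>(1) assms(1)] by (auto simp: perfect_matching_def)
    then show "has_perfect_int_matching k V (E - F)"
      using finite_edges by (simp add: has_perfect_int_matchingI)
  qed
qed

end

section \<open>The arrangement graph\<close>

lemma finite_arr_vertices: "finite (arr_vertices n s)"
proof -
  have "arr_vertices n s \<subseteq> {xs. set xs \<subseteq> {1..n} \<and> length xs = s}"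
    by (auto simp: arr_vertices_def)
  then show ?thesis
    using finite_lists_length_eq[of "{1..n}" s] finite_subset by blast
qed

lemma arr_adj_sym: "arr_adj s x y \<longleftrightarrow> arr_adj s y x"
proof -
  have "{i. i < s \<and> x ! i \<noteq> y ! i} = {i. i < s \<and> y ! i \<noteq> x ! i}"
    by auto
  then show ?thesis
    by (simp add: arr_adj_def)
qed

lemma arr_edge_doubleton:
  assumes "e \<in> arr_edges n s"
  shows "e \<subseteq> arr_vertices n s \<and> card e = 2"
proof -
  obtain x y where "e = {x, y}" "x \<in> arr_vertices n s" "y \<in> arr_vertices n s" "arr_adj s x y"
    using assms by (auto simp: arr_edges_def)
  moreover have "x \<noteq> y"
    using \<open>arr_adj s x y\<close> by (auto simp: arr_adj_def)
  ultimately show ?thesis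
    by auto
qed

lemma update_in_arr_edges:
  assumes x: "x \<in> arr_vertices n s" and "j < s" "b \<in> {1..n} - set x"
  shows "x[j := b] \<in> arr_vertices n s" "arr_adj s x (x[j := b])" "{x, x[j := b]} \<in> arr_edges n s"
proof -
  have "length x = s" "distinct x" "set x \<subseteq> {1..n}"
    using x by (auto simp: arr_vertices_def)
  moreover have "set (x[j := b]) \<subseteq> insert b (set x)"
    by (rule set_update_subset_insert)
  ultimately show y: "x[j := b] \<in> arr_vertices n s"
    using assms by (auto simp: arr_vertices_def intro!: distinct_list_update)
  have "{i. i < s \<and> x ! i \<noteq> x[j := b] ! i} = {j}"
    using assms \<open>length x = s\<close> by (auto simp: nth_list_update)
  then show adj: "arr_adj s x (x[j := b])"
    by (simp add: arr_adj_def)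
  show "{x, x[j := b]} \<in> arr_edges n s"
    using x y adj by (auto simp: arr_edges_def)
qed

lemma arr_adj_imp_update:
  assumes "x \<in> arr_vertices n s" "y \<in> arr_vertices n s" "arr_adj s x y"
  obtains j b where "j < s" "b \<in> {1..n} - set x" "y = x[j := b]"
proof -
  have lx: "length x = s" and ly: "length y = s" and dy: "distinct y" and sy: "set y \<subseteq> {1..n}"
    using assms by (auto simp: arr_vertices_def)
  obtain j where "{i. i < s \<and> x ! i \<noteq> y ! i} = {j}"
    using assms(3) card_1_singletonE unfolding arr_adj_def by blast
  then have j: "j < s" "x ! j \<noteq> y ! j" and same: "\<And>i. i < s \<Longrightarrow> i \<noteq> j \<Longrightarrow> x ! i = y ! i"
    by blast+
  have "y = x[j := y ! j]"
    by (rule nth_equalityI) (use lx ly same j in \<open>auto simp: nth_list_update\<close>)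
  moreover have "y ! j \<notin> set x"
  proof
    assume "y ! j \<in> set x"
    then obtain i where "i < s" "x ! i = y ! j"
      using lx by (auto simp: in_set_conv_nth)
    then show False
      using same[of i] j dy ly by (cases "i = j") (auto simp: nth_eq_iff_index_eq)
  qed
  moreover have "y ! j \<in> {1..n}"
    using sy ly j by (auto intro: nth_mem)
  ultimately show ?thesis
    using that j by blast
qed

lemma incident_edges_arr:
  assumes "x \<in> arr_vertices n s"
  shows "incident_edges (arr_edges n s) x = (\<lambda>(j, b). {x, x[j := b]}) ` ({..<s} \<times> ({1..n} - set x))"
proof (intro set_eqI iffI)
  fix e
  assume "e \<in> incident_edges (arr_edges n s) x"
  then obtain u v where uv: "e = {u, v}" "u \<in> arr_vertices n s" "v \<in> arr_vertices n s"
      "arr_adj s u v" "x \<in> e"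
    by (auto simp: incident_edges_def arr_edges_def)
  obtain y where "e = {x, y}" "y \<in> arr_vertices n s" "arr_adj s x y"
  proof (cases "x = u")
    case True
    then show ?thesis
      using that uv by blast
  next
    case False
    then have "x = v"
      using uv by blast
    then show ?thesis
      using that[of u] uv arr_adj_sym by (simp add: insert_commute)
  qed
  moreover obtain j b where "j < s" "b \<in> {1..n} - set x" "y = x[j := b]"
    using arr_adj_imp_update[OF assms \<open>y \<in> _\<close> \<open>arr_adj s x y\<close>] by blast
  ultimately show "e \<in> (\<lambda>(j, b). {x, x[j := b]}) ` ({..<s} \<times> ({1..n} - set x))"
    by auto
next
  fix e
  assume "e \<in> (\<lambda>(j, b). {x, x[j := b]}) ` ({..<s} \<times> ({1..n} - set x))"
  then show "e \<in> incident_edges (arr_edges n s) x"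
    using update_in_arr_edges(3)[OF assms] by (auto simp: incident_edges_def)
qed

lemma card_incident_edges_arr:
  assumes x: "x \<in> arr_vertices n s"
  shows "card (incident_edges (arr_edges n s) x) = s * (n - s)"
proof -
  have lx: "length x = s" and "distinct x" "set x \<subseteq> {1..n}"
    using x by (auto simp: arr_vertices_def)
  have "inj_on (\<lambda>(j, b). {x, x[j := b]}) ({..<s} \<times> ({1..n} - set x))"
  proof (rule inj_onI, clarify)
    fix j b j' b'
    assume jb: "j < s" "b \<in> {1..n}" "b \<notin> set x" "j' < s" "b' \<in> {1..n}" "b' \<notin> set x"
      and "{x, x[j := b]} = {x, x[j' := b']}"
    moreover have "x[j := b] \<noteq> x" "x[j' := b'] \<noteq> x"
      using jb lx by (metis nth_list_update_eq nth_mem)+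
    ultimately have eq: "x[j := b] = x[j' := b']"
      by (metis doubleton_eq_iff)
    then have "j = j'"
      using jb lx by (metis nth_list_update_eq nth_list_update_neq nth_mem)
    then show "j = j' \<and> b = b'"
      using eq jb lx by (metis nth_list_update_eq)
  qed
  moreover have "card ({1..n} - set x) = n - s"
    using \<open>distinct x\<close> \<open>set x \<subseteq> {1..n}\<close> lx by (simp add: card_Diff_subset distinct_card)
  ultimately show ?thesis
    unfolding incident_edges_arr[OF x] by (simp add: card_image card_cartesian_product)
qed

lemma regular_graph_arr: "regular_graph (arr_vertices n s) (arr_edges n s) (s * (n - s))"
  by unfold_locales (auto simp: finite_arr_vertices arr_edge_doubleton card_incident_edges_arr)

lemma permutes_upt_map_eq:
  assumes "distinct z" "length z = s" "set z \<subseteq> {1..n}" "b \<in> {1..n} - set z" "s < n"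
  obtains \<sigma> where "\<sigma> permutes {1..n}" "map \<sigma> [1..<Suc s] = z" "\<sigma> (Suc s) = b"
proof -
  have "distinct [1..<Suc (Suc s)]" "distinct (z @ [b])"
    "length [1..<Suc (Suc s)] = length (z @ [b])"
    "set [1..<Suc (Suc s)] \<subseteq> {1..n}" "set (z @ [b]) \<subseteq> {1..n}"
    using assms by (auto simp del: upt_Suc)
  then obtain \<sigma> where \<sigma>: "\<sigma> permutes {1..n}" "map \<sigma> [1..<Suc (Suc s)] = z @ [b]"
    by (rule permutes_map_eq[OF finite_atLeastAtMost])
  have "map \<sigma> [1..<Suc s] @ [\<sigma> (Suc s)] = z @ [b]"
    using \<sigma>(2) by (simp del: upt_Suc add: upt_Suc_append)
  then show ?thesis
    using that \<sigma>(1) by (simp only: append1_eq_conv)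
qed

text \<open>The identity outside the vertex set, as \<open>permutes\<close> requires.\<close>

definition arr_aut :: "nat \<Rightarrow> nat \<Rightarrow> (nat \<Rightarrow> nat) \<Rightarrow> (nat \<Rightarrow> nat) \<Rightarrow> nat list \<Rightarrow> nat list" where
  "arr_aut n s \<sigma> \<tau> x = (if x \<in> arr_vertices n s then permute_list \<tau> (map \<sigma> x) else x)"

lemma permute_list_map_in_arr_vertices:
  assumes "\<sigma> permutes {1..n}" "\<tau> permutes {..<s}" "x \<in> arr_vertices n s"
  shows "permute_list \<tau> (map \<sigma> x) \<in> arr_vertices n s"
proof -
  have x: "length x = s" "distinct x" "set x \<subseteq> {1..n}"
    using assms(3) by (auto simp: arr_vertices_def)
  have "set (map \<sigma> x) \<subseteq> {1..n}"
    using x(3) permutes_image[OF assms(1)] by auto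
  moreover have "distinct (map \<sigma> x)"
    using x(2) permutes_inj[OF assms(1)] by (simp add: distinct_map inj_on_subset[OF _ subset_UNIV])
  ultimately show ?thesis
    using assms(2) x(1) by (simp add: arr_vertices_def)
qed

lemma permute_list_map_inj:
  fixes \<sigma> :: "'a \<Rightarrow> 'b"
  assumes "inj \<sigma>" "\<tau> permutes {..<s}" "length x = s" "length y = s"
    and "permute_list \<tau> (map \<sigma> x) = permute_list \<tau> (map \<sigma> y)"
  shows "x = y"
proof -
  have undo: "permute_list (inv \<tau>) (permute_list \<tau> zs) = zs" if "length zs = s" for zs :: "'b list"
  proof -
    have "permute_list (inv \<tau>) (permute_list \<tau> zs) = permute_list (\<tau> \<circ> inv \<tau>) zs"
      by (rule permute_list_compose[symmetric]) (simp add: that permutes_inv[OF assms(2)])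
    then show ?thesis
      by (simp add: permutes_inv_o(1)[OF assms(2)])
  qed
  have "map \<sigma> x = permute_list (inv \<tau>) (permute_list \<tau> (map \<sigma> x))"
    using undo[of "map \<sigma> x"] assms(3) by simp
  also have "\<dots> = map \<sigma> y"
    using undo[of "map \<sigma> y"] assms(4,5) by simp
  finally show ?thesis
    using assms(1) by simp
qed

lemma arr_adj_permute_list_map:
  assumes "inj \<sigma>" "\<tau> permutes {..<s}" "length x = s" "length y = s"
  shows "arr_adj s (permute_list \<tau> (map \<sigma> x)) (permute_list \<tau> (map \<sigma> y)) \<longleftrightarrow> arr_adj s x y"
proof -
  have lt: "\<tau> i < s \<longleftrightarrow> i < s" for i
    using permutes_in_image[OF assms(2)] by simp
  have nth: "permute_list \<tau> (map \<sigma> z) ! i = \<sigma> (z ! \<tau> i)" if "length z = s" "i < s" for z i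
    using that lt by (simp add: permute_list_def)
  have "{i. i < s \<and> permute_list \<tau> (map \<sigma> x) ! i \<noteq> permute_list \<tau> (map \<sigma> y) ! i}
      = \<tau> -` {j. j < s \<and> x ! j \<noteq> y ! j}"
    using nth[OF assms(3)] nth[OF assms(4)] lt by (auto simp: inj_eq[OF assms(1)])
  moreover have "card (\<tau> -` {j. j < s \<and> x ! j \<noteq> y ! j}) = card {j. j < s \<and> x ! j \<noteq> y ! j}"
    using permutes_inj[OF assms(2)] permutes_surj[OF assms(2)] by (intro card_vimage_inj) auto
  ultimately show ?thesis
    by (simp add: arr_adj_def)
qed

lemma arr_aut_in_graph_aut:
  assumes \<sigma>: "\<sigma> permutes {1..n}" and \<tau>: "\<tau> permutes {..<s}"
  shows "arr_aut n s \<sigma> \<tau> \<in> graph_aut (arr_vertices n s) (arr_edges n s)"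
proof -
  let ?V = "arr_vertices n s" and ?\<pi> = "arr_aut n s \<sigma> \<tau>"
  have into: "?\<pi> ` ?V \<subseteq> ?V"
    using permute_list_map_in_arr_vertices[OF \<sigma> \<tau>] by (auto simp: arr_aut_def)
  have "inj_on ?\<pi> ?V"
    using permute_list_map_inj[OF permutes_inj[OF \<sigma>] \<tau>]
    by (intro inj_onI) (auto simp: arr_aut_def arr_vertices_def)
  with into have "bij_betw ?\<pi> ?V ?V"
    using endo_inj_surj[OF finite_arr_vertices] by (simp add: bij_betw_def)
  then have "?\<pi> permutes ?V"
    by (rule bij_imp_permutes) (simp add: arr_aut_def)
  moreover have "?\<pi> ` e \<in> arr_edges n s" if "e \<in> arr_edges n s" for e
  proof -
    from that obtain x y where "e = {x, y}" "x \<in> ?V" "y \<in> ?V" "arr_adj s x y"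
      unfolding arr_edges_def by blast
    moreover have "arr_adj s (?\<pi> x) (?\<pi> y)"
      using calculation arr_adj_permute_list_map[OF permutes_inj[OF \<sigma>] \<tau>]
      by (simp add: arr_aut_def arr_vertices_def)
    ultimately show ?thesis
      using into by (auto simp: arr_edges_def)
  qed
  ultimately show ?thesis
    by (simp add: graph_aut_def)
qed

definition arr_base_edge :: "nat \<Rightarrow> nat list set" where
  "arr_base_edge s = {[1..<Suc s], [1..<Suc s][0 := Suc s]}"

lemma arr_base_edge_in_arr_edges:
  assumes "0 < s" "s < n"
  shows "arr_base_edge s \<in> arr_edges n s"
proof -
  have "[1..<Suc s] \<in> arr_vertices n s"
    using assms(2) by (auto simp: arr_vertices_def simp del: upt_Suc)
  from update_in_arr_edges(3)[OF this assms(1)] show ?thesis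
    using assms(2) by (simp add: arr_base_edge_def del: upt_Suc)
qed

lemma arr_edge_transitive:
  assumes "0 < s" "s < n" "f \<in> arr_edges n s"
  shows "\<exists>\<pi>\<in>graph_aut (arr_vertices n s) (arr_edges n s). \<pi> ` arr_base_edge s = f"
proof -
  obtain x y where xy: "f = {x, y}" "x \<in> arr_vertices n s" "y \<in> arr_vertices n s" "arr_adj s x y"
    using assms(3) by (auto simp: arr_edges_def)
  obtain j b where jb: "j < s" "b \<in> {1..n} - set x" "y = x[j := b]"
    using xy(2-4) by (rule arr_adj_imp_update)
  have x: "length x = s" "distinct x" "set x \<subseteq> {1..n}"
    using xy(2) by (auto simp: arr_vertices_def)
  define \<tau> where "\<tau> = transpose 0 j"
  have \<tau>: "\<tau> permutes {..<s}"
    unfolding \<tau>_def using assms(1) jb(1) by (intro permutes_swap_id) auto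
  define z where "z = permute_list \<tau> x"
  have "distinct z" "length z = s" "set z \<subseteq> {1..n}" "b \<in> {1..n} - set z"
    using \<tau> x jb(2) by (simp_all add: z_def)
  then obtain \<sigma> where \<sigma>: "\<sigma> permutes {1..n}" "map \<sigma> [1..<Suc s] = z" "\<sigma> (Suc s) = b"
    using assms(2) by (rule permutes_upt_map_eq)
  have base: "[1..<Suc s] \<in> arr_vertices n s" "[1..<Suc s][0 := Suc s] \<in> arr_vertices n s"
    using arr_edge_doubleton[OF arr_base_edge_in_arr_edges[OF assms(1,2)]]
    by (simp_all add: arr_base_edge_def del: upt_Suc)
  let ?\<pi> = "arr_aut n s \<sigma> \<tau>"
  have "?\<pi> [1..<Suc s] = x"
    using base(1) \<sigma>(2) x(1) jb(1) assms(1)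
    by (simp add: arr_aut_def z_def \<tau>_def permute_list_transpose_involutory del: upt_Suc)
  moreover have "?\<pi> ([1..<Suc s][0 := Suc s]) = x[j := b]"
    using base(2) \<sigma>(2,3) x(1) jb(1) assms(1)
    by (simp add: arr_aut_def map_update z_def \<tau>_def permute_list_transpose_update
        permute_list_transpose_involutory del: upt_Suc)
  ultimately have "?\<pi> ` arr_base_edge s = f"
    using xy(1) jb(3) by (simp add: arr_base_edge_def del: upt_Suc)
  then show ?thesis
    using arr_aut_in_graph_aut[OF \<sigma>(1) \<tau>] by blast
qed

lemma edge_transitive_graph_arr:
  assumes "0 < s" "s < n"
  shows "edge_transitive_graph (arr_vertices n s) (arr_edges n s) (s * (n - s)) (arr_base_edge s)"
  using regular_graph_arr arr_base_edge_in_arr_edges[OF assms] arr_edge_transitive[OF assms]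
  by (simp add: edge_transitive_graph_def edge_transitive_graph_axioms_def)

section \<open>A perfect matching of the arrangement graph\<close>

definition flip :: "nat \<Rightarrow> nat" where
  "flip i = (if even i then Suc i else i - 1)"

lemma flip_flip [simp]: "flip (flip i) = i"
  by (auto simp: flip_def)

lemma flip_neq [simp]: "flip i \<noteq> i" "i \<noteq> flip i"
  by (auto simp: flip_def elim: oddE)

lemma flip_inj [simp]: "flip i = flip j \<longleftrightarrow> i = j"
  by (metis flip_flip)

lemma flip_less: "even N \<Longrightarrow> i < N \<Longrightarrow> flip i < N"
  by (auto simp: flip_def) (metis Suc_lessI even_Suc)

lemma flip_div2 [simp]: "flip i div 2 = i div 2"
  by (auto simp: flip_def elim!: evenE oddE)

definition next_block :: "nat \<Rightarrow> nat \<Rightarrow> nat" where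
  "next_block N a = 2 * ((a div 2 + 1) mod (N div 2))"

lemma next_block_flip [simp]: "next_block N (flip a) = next_block N a"
  by (simp add: next_block_def)

lemma next_block_less: "even N \<Longrightarrow> 4 \<le> N \<Longrightarrow> next_block N a < N"
  by (auto simp: next_block_def elim!: evenE)

lemma next_block_div2:
  assumes "even N" "4 \<le> N" "a < N"
  shows "next_block N a div 2 \<noteq> a div 2"
proof -
  obtain h where h: "N = 2 * h" "2 \<le> h"
    using assms(1,2) by (auto elim!: evenE)
  then have "a div 2 < h"
    using assms(3) by auto
  moreover have "next_block N a div 2 = (a div 2 + 1) mod h"
    using h by (simp add: next_block_def)
  ultimately show ?thesis
  proof (cases "a div 2 + 1 < h")
    case False
    then have "a div 2 + 1 = h"
      using \<open>a div 2 < h\<close> by simp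
    then show ?thesis
      using \<open>next_block N a div 2 = _\<close> h by simp
  qed simp
qed

text \<open>Flipping the second coordinate matches all ordered pairs except the \<open>(a, flip a)\<close>; these
  are matched inside the next block \<open>c\<close>, and the pairs \<open>(a, c)\<close> thereby displaced are matched by
  flipping the first coordinate.\<close>

definition pair_match :: "nat \<Rightarrow> nat \<Rightarrow> nat \<Rightarrow> nat \<times> nat" where
  "pair_match N a b =
    (let c = next_block N a in
     if b = c then (flip a, b)
     else if b = flip a then (a, flip c)
     else if b = flip c then (a, flip a)
     else (a, flip b))"

lemma pair_match:
  assumes "even N" "4 \<le> N" "a < N" "b < N" "a \<noteq> b" "pair_match N a b = (a', b')"
  shows "a' < N \<and> b' < N \<and> a' \<noteq> b' \<and> pair_match N a' b' = (a, b) \<and> (a' = a \<longleftrightarrow> b' \<noteq> b)"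
proof -
  let ?c = "next_block N a"
  have c: "?c < N"
    using next_block_less assms(1,2) by blast
  have distinct: "?c \<noteq> a" "?c \<noteq> flip a" "flip ?c \<noteq> a" "flip ?c \<noteq> flip a"
    "a \<noteq> ?c" "flip a \<noteq> ?c" "a \<noteq> flip ?c" "flip a \<noteq> flip ?c"
    using next_block_div2[OF assms(1-3)] by (metis flip_div2)+
  consider
      "b = ?c" "(a', b') = (flip a, ?c)"
    | "b = flip a" "(a', b') = (a, flip ?c)"
    | "b = flip ?c" "(a', b') = (a, flip a)"
    | "b \<noteq> ?c" "b \<noteq> flip a" "b \<noteq> flip ?c" "(a', b') = (a, flip b)"
    using assms(6) distinct unfolding pair_match_def Let_def by (auto split: if_splits)
  then show ?thesis
  proof cases
    case 4
    moreover have "a \<noteq> flip b" "flip b \<noteq> ?c"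
      using \<open>b \<noteq> flip a\<close> \<open>b \<noteq> flip ?c\<close> by (metis flip_flip)+
    ultimately show ?thesis
      using c distinct flip_less[OF assms(1)] assms(3-5) by (simp add: pair_match_def Let_def)
  qed (use c distinct flip_less[OF assms(1)] assms(3-5) in \<open>simp_all add: pair_match_def Let_def\<close>)
qed

text \<open>The admissible first entries \<open>{1..n} - set (tl x)\<close> form a set of size \<open>n - s + 1\<close>; if that
  is odd, the admissible first two entries come from \<open>{1..n} - set (drop 2 x)\<close>, of even size
  \<open>n - s + 2 \<ge> 4\<close>, and are moved by \<open>pair_match\<close>.\<close>

definition arr_partner :: "nat \<Rightarrow> nat \<Rightarrow> nat list \<Rightarrow> nat list" where
  "arr_partner n s x =
    (if even (n - s + 1) then
       let W = {1..n} - set (tl x) in x[0 := elem_at W (flip (index_in W (x ! 0)))]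
     else
       let W = {1..n} - set (drop 2 x);
           ab = pair_match (card W) (index_in W (x ! 0)) (index_in W (x ! 1))
       in elem_at W (fst ab) # elem_at W (snd ab) # drop 2 x)"

lemma arr_partner_even:
  assumes "even (n - s + 1)" "x \<in> arr_vertices n s" "0 < s" "s \<le> n"
  shows "arr_partner n s x \<in> arr_vertices n s \<and> arr_partner n s (arr_partner n s x) = x
    \<and> {x, arr_partner n s x} \<in> arr_edges n s"
proof -
  obtain p r where x: "x = p # r"
    using assms(2,3) by (cases x) (auto simp: arr_vertices_def)
  define W where "W = {1..n} - set r"
  have "length r = s - 1" "distinct (p # r)" "set (p # r) \<subseteq> {1..n}"
    using assms(2) x by (auto simp: arr_vertices_def)
  then have W: "finite W" "card W = n - s + 1" "p \<in> W"
    using assms(3,4) by (auto simp: W_def card_Diff_subset distinct_card)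
  define c where "c = elem_at W (flip (index_in W p))"
  have "even (card W)"
    using assms(1) W(2) by simp
  then have "flip (index_in W p) < card W"
    using index_in_less[OF W(1,3)] by (rule flip_less)
  then have c: "c \<in> W" "index_in W c = flip (index_in W p)"
    using W(1) by (simp_all add: c_def elem_at_in)
  then have "c \<noteq> p"
    using flip_neq by metis
  then have "c \<in> {1..n} - set x"
    using c(1) x by (auto simp: W_def)
  moreover have partner_x: "arr_partner n s x = x[0 := c]"
    using assms(1) x by (simp add: arr_partner_def Let_def W_def c_def)
  moreover have "arr_partner n s (x[0 := c]) = x"
    using assms(1) x c(2) W by (simp add: arr_partner_def Let_def W_def)
  ultimately show ?thesis
    using update_in_arr_edges[OF assms(2,3)] by simp
qed

lemma arr_partner_odd:
  assumes "odd (n - s + 1)" "x \<in> arr_vertices n s" "2 \<le> s" "s + 2 \<le> n"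
  shows "arr_partner n s x \<in> arr_vertices n s \<and> arr_partner n s (arr_partner n s x) = x
    \<and> {x, arr_partner n s x} \<in> arr_edges n s"
proof -
  obtain p q r where x: "x = p # q # r"
    using assms(2,3) by (auto simp: arr_vertices_def numeral_2_eq_2 Suc_le_length_iff)
  define W where "W = {1..n} - set r"
  have "length r = s - 2" "distinct (p # q # r)" "set (p # q # r) \<subseteq> {1..n}"
    using assms(2) x by (auto simp: arr_vertices_def)
  then have W: "finite W" "card W = n - s + 2" "p \<in> W" "q \<in> W" "p \<noteq> q"
    using assms(3,4) by (auto simp: W_def card_Diff_subset distinct_card)
  have N: "even (card W)" "4 \<le> card W"
    using assms(1,4) W(2) by auto
  define a where "a = index_in W p"
  define b where "b = index_in W q"
  obtain a' b' where ab': "pair_match (card W) a b = (a', b')"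
    by fastforce
  have "elem_at W a = p" "elem_at W b = q"
    using W by (simp_all add: a_def b_def)
  then have "a \<noteq> b"
    using W(5) by auto
  moreover have "a < card W" "b < card W"
    unfolding a_def b_def using index_in_less[OF W(1)] W(3,4) by simp_all
  ultimately have m: "a' < card W" "b' < card W" "a' \<noteq> b'" "pair_match (card W) a' b' = (a, b)"
      "a' = a \<longleftrightarrow> b' \<noteq> b"
    using pair_match[OF N _ _ _ ab'] by blast+
  define y where "y = elem_at W a' # elem_at W b' # r"
  have partner_x: "arr_partner n s x = y"
    using assms(1) x ab' by (simp add: arr_partner_def Let_def W_def a_def b_def y_def)
  have "arr_partner n s y = x"
    using assms(1) x m W by (simp add: arr_partner_def Let_def y_def W_def a_def b_def)
  moreover have "y \<in> arr_vertices n s \<and> {x, y} \<in> arr_edges n s"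
  proof (cases "a' = a")
    case True
    then have "y = x[1 := elem_at W b']" "elem_at W b' \<in> {1..n} - set x"
      using m W elem_at_in[OF W(1)] index_in_elem_at[OF W(1)]
      by (auto simp: x y_def a_def b_def W_def)
    then show ?thesis
      using update_in_arr_edges[OF assms(2), of 1] assms(3) by simp
  next
    case False
    then have "y = x[0 := elem_at W a']" "elem_at W a' \<in> {1..n} - set x"
      using m W elem_at_in[OF W(1)] index_in_elem_at[OF W(1)]
      by (auto simp: x y_def a_def b_def W_def)
    then show ?thesis
      using update_in_arr_edges[OF assms(2), of 0] assms(3) by simp
  qed
  ultimately show ?thesis
    using partner_x by simp
qed

lemma perfect_matching_arr:
  assumes "2 \<le> s" "s + 2 \<le> n"
  shows "perfect_matching (arr_vertices n s) (arr_edges n s)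
    ((\<lambda>x. {x, arr_partner n s x}) ` arr_vertices n s)"
  using arr_partner_even[of n s] arr_partner_odd[of n s] assms
  by (intro perfect_matching_of_involution) (cases "even (n - s + 1)"; simp)

theorem mainTheorem8:
  fixes k n s :: nat
  assumes "odd k" and "k \<ge> 3" and "2 \<le> s" and "s \<le> n - 2"
  shows "mp_int k (arr_vertices n s) (arr_edges n s) = s * (n - s)"
proof -
  have s: "2 \<le> s" "s + 2 \<le> n"
    using assms(3,4) by arith+
  then have "edge_transitive_graph (arr_vertices n s) (arr_edges n s) (s * (n - s)) (arr_base_edge s)"
    by (intro edge_transitive_graph_arr) auto
  from edge_transitive_graph.mp_int_eq_degree[OF this perfect_matching_arr[OF s]]
  show ?thesis
    using assms(2) by simp
qed

end
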